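(* Let $\Sigma=\{c_1\prec\dots\prec c_\sigma\}$, $n\ge1$, and nonnegative integers $n_c$ ($c\in\Sigma$) with $\sum_c n_c=n-1$ be given, and let $\mathcal U$, $\mathcal M$, $f$ be as in the context. For every matrix $M\in\mathcal M$, its $n$ rotations $M^0,M^1,\dots,M^{n-1}$ are pairwise distinct, and exactly one of them belongs to $f(\mathcal U)$.
   Context: A trie over a finite totally ordered alphabet $\Sigma$ is a rooted ordered tree with edges labeled by symbols of $\Sigma$ such that edges leaving the same node have distinct labels and siblings are ordered by their incoming labels; $out(u)$ denotes the set of labels of edges leaving node $u$. $\mathcal U$ is the set of tries with $n$ nodes over $\Sigma$ in which exactly $n_c$ edges are labeled $c$, for every $c$. $\mathcal M$ is the set of all $\sigma\times n$ binary matrices whose $i$-th row contains exactly $n_{c_i}$ ones, for every $i\in[\sigma]$. The map $f:\mathcal U\to\mathcal M$ sends a trie with nodes $u_1,\dots,u_n$ in pre-order (children visited in increasing label order) to the matrix $M$ with $M[i][j]=1$ iff $c_i\in out(u_j)$. For $M\in\mathcal M$ and integer $r\ge0$, the $r$-th rotation $M^r$ is the matrix whose $j$-th column is the $((j+r-1)\bmod n)+1$-th column of $M$, for every $j\in[n]$. *)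

theory Defs
  imports Main
begin

text \<open>The alphabet is {0..<sigma} with the natural order (c_i corresponds to i-1).
  A trie is an ordered tree whose children are listed together with the labels
  of their incoming edges.\<close>

datatype trie = Node "(nat \<times> trie) list"

fun wf_trie :: "nat \<Rightarrow> trie \<Rightarrow> bool" where
  "wf_trie \<sigma> (Node cs) =
     (sorted_wrt (<) (map fst cs) \<and> (\<forall>p\<in>set cs. fst p < \<sigma> \<and> wf_trie \<sigma> (snd p)))"

fun pre_outs :: "trie \<Rightarrow> nat set list" where
  "pre_outs (Node cs) = set (map fst cs) # concat (map (\<lambda>p. pre_outs (snd p)) cs)"

definition num_nodes :: "trie \<Rightarrow> nat" where
  "num_nodes t = length (pre_outs t)"

fun edge_count :: "nat \<Rightarrow> trie \<Rightarrow> nat" where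
  "edge_count c (Node cs) =
     length (filter (\<lambda>p. fst p = c) cs) + sum_list (map (\<lambda>p. edge_count c (snd p)) cs)"

definition tries_U :: "nat \<Rightarrow> nat \<Rightarrow> (nat \<Rightarrow> nat) \<Rightarrow> trie set" where
  "tries_U \<sigma> n nc = {t. wf_trie \<sigma> t \<and> num_nodes t = n \<and> (\<forall>c<\<sigma>. edge_count c t = nc c)}"

text \<open>Binary sigma x n matrices, 0-indexed rows i < sigma and columns j < n,
  represented as predicates that are False outside the index range.\<close>
type_synonym bmat = "nat \<Rightarrow> nat \<Rightarrow> bool"

definition mats_M :: "nat \<Rightarrow> nat \<Rightarrow> (nat \<Rightarrow> nat) \<Rightarrow> bmat set" where
  "mats_M \<sigma> n nc = {M. (\<forall>i j. M i j \<longrightarrow> i < \<sigma> \<and> j < n) \<and>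
                         (\<forall>i<\<sigma>. card {j. j < n \<and> M i j} = nc i)}"

definition trie_matrix :: "nat \<Rightarrow> trie \<Rightarrow> bmat" where
  "trie_matrix \<sigma> t = (\<lambda>i j. i < \<sigma> \<and> j < length (pre_outs t) \<and> i \<in> pre_outs t ! j)"

text \<open>r-th rotation: column j (0-based) of M^r is column (j + r) mod n of M
  (the 1-based formula ((j+r-1) mod n)+1 shifted to 0-based indices).\<close>
definition rot :: "nat \<Rightarrow> bmat \<Rightarrow> nat \<Rightarrow> bmat" where
  "rot n M r = (\<lambda>i j. j < n \<and> M i ((j + r) mod n))"

end

(*
  Read the columns of a matrix as the out-sets of nodes listed in pre-order.  Such a list
  encodes a trie iff, scanning it with a counter of subtrees still to be read (initially 1,
  each node changing it by |out(u)| - 1), the counter stays positive until the very end,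
  where it reaches 0.  The column weights |out(u)| - 1 of a matrix in M sum to
  (n - 1) - n = -1, so by the cycle lemma exactly one cyclic rotation of them has all proper
  prefix sums nonnegative.  The same uniqueness rules out any nontrivial rotational symmetry
  of the weights, so the n rotations of M are pairwise distinct.
*)
theory Submission
  imports Defs
begin

(* k counts the subtrees still to be read; reading a node uses up one and opens one per
   outgoing edge, so forest_code k L says that L is the pre-order out-set list of k tries. *)
fun forest_code :: "nat \<Rightarrow> nat set list \<Rightarrow> bool" where
  "forest_code k [] \<longleftrightarrow> k = 0"
| "forest_code k (S # L) \<longleftrightarrow> 0 < k \<and> forest_code (k - 1 + card S) L"

definition excess :: "nat set list \<Rightarrow> int" where
  "excess L = sum_list (map (\<lambda>S. int (card S) - 1) L)"

lemma excess_Nil [simp]: "excess [] = 0"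
  and excess_Cons [simp]: "excess (S # L) = int (card S) - 1 + excess L"
  by (simp_all add: excess_def)

lemma excess_conv_sum_list_card: "excess L = int (sum_list (map card L)) - int (length L)"
  by (induction L) simp_all

lemma forest_code_iff_excess:
  "forest_code k L \<longleftrightarrow>
     (\<forall>m<length L. 0 < int k + excess (take m L)) \<and> int k + excess L = 0"
proof (induction L arbitrary: k)
  case Nil
  then show ?case by simp
next
  case (Cons S L)
  show ?case
  proof (cases "0 < k")
    case True
    then have "int (k - 1 + card S) + e = int k + (int (card S) - 1 + e)" for e by simp
    then show ?thesis
      using True Cons.IH[of "k - 1 + card S"] by (simp only: length_Cons All_less_Suc2) simp
  qed (simp add: All_less_Suc2)
qed

lemma forest_code_one_iff:
  "forest_code 1 L \<longleftrightarrow> (\<forall>m<length L. 0 \<le> excess (take m L)) \<and> excess L = -1"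
  by (auto simp: forest_code_iff_excess)

lemma forest_code_append:
  "forest_code k L \<Longrightarrow> forest_code j L' \<Longrightarrow> forest_code (k + j) (L @ L')"
proof (induction L arbitrary: k)
  case (Cons S L)
  from Cons.prems(1) have "0 < k" and L: "forest_code (k - 1 + card S) L"
    by (simp_all only: forest_code.simps)
  have "k + j - 1 + card S = k - 1 + card S + j" using \<open>0 < k\<close> by simp
  with Cons.IH[OF L Cons.prems(2)] have "forest_code (k + j - 1 + card S) (L @ L')"
    by (simp only:)
  with \<open>0 < k\<close> show ?case by (simp only: append_Cons forest_code.simps) simp
qed simp

lemma forest_code_concat:
  "\<forall>L\<in>set Ls. forest_code 1 L \<Longrightarrow> forest_code (length Ls) (concat Ls)"
proof (induction Ls)
  case (Cons L Ls)
  then have "forest_code (1 + length Ls) (L @ concat Ls)" by (intro forest_code_append) simp_all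
  then show ?case by simp
qed simp

lemma pre_outs_forest_code: "wf_trie \<sigma> t \<Longrightarrow> forest_code 1 (pre_outs t)"
proof (induction \<sigma> t rule: wf_trie.induct)
  case (1 \<sigma> cs)
  have "card (set (map fst cs)) = length cs"
    using "1.prems" distinct_card[of "map fst cs"] by (simp add: strict_sorted_iff)
  moreover have "forest_code (length cs) (concat (map (\<lambda>p. pre_outs (snd p)) cs))"
    using forest_code_concat[of "map (\<lambda>p. pre_outs (snd p)) cs"] "1.IH" "1.prems" by auto
  ultimately show ?case by simp
qed

lemma pre_outs_Node_zip:
  "length xs = length ts \<Longrightarrow> pre_outs (Node (zip xs ts)) = set xs # concat (map pre_outs ts)"
proof -
  assume "length xs = length ts"
  have "map (\<lambda>p. pre_outs (snd p)) (zip xs ts) = map pre_outs (map snd (zip xs ts))" by simp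
  also have "\<dots> = map pre_outs ts" using \<open>length xs = length ts\<close> by simp
  finally show ?thesis using \<open>length xs = length ts\<close> by simp
qed

lemma wf_trie_Node_zip:
  assumes "sorted_wrt (<) xs" and "length xs = length ts"
    and "set xs \<subseteq> {..<\<sigma>}" and "\<forall>t\<in>set ts. wf_trie \<sigma> t"
  shows "wf_trie \<sigma> (Node (zip xs ts))"
proof -
  have "xs ! i < \<sigma>" if "i < length xs" for i
    using assms(3) nth_mem[OF that] by blast
  then show ?thesis using assms(1,2,4) by (auto simp: set_zip)
qed

lemma forest_code_imp_ex_forest:
  assumes "forest_code k L" and "\<forall>S\<in>set L. S \<subseteq> {..<\<sigma>}"
  shows "\<exists>ts. length ts = k \<and> (\<forall>t\<in>set ts. wf_trie \<sigma> t) \<and> concat (map pre_outs ts) = L"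
  using assms
proof (induction L arbitrary: k)
  case Nil
  then show ?case by simp
next
  case (Cons S L)
  from Cons.prems(1) have "0 < k" and "forest_code (k - 1 + card S) L"
    by (simp_all only: forest_code.simps)
  with Cons.IH Cons.prems(2) obtain ts where ts: "length ts = k - 1 + card S"
    "\<forall>t\<in>set ts. wf_trie \<sigma> t" "concat (map pre_outs ts) = L"
    by auto
  define xs where "xs = sorted_list_of_set S"
  have "S \<subseteq> {..<\<sigma>}" using Cons.prems(2) by simp
  then have "finite S" by (rule finite_subset) simp
  then have xs: "set xs = S" "sorted_wrt (<) xs" "length xs = card S"
    by (simp_all add: xs_def)
  define t where "t = Node (zip xs (take (card S) ts))"
  have "length xs = length (take (card S) ts)" using xs(3) ts(1) \<open>0 < k\<close> by simp
  then have "pre_outs t = S # concat (map pre_outs (take (card S) ts))"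
    unfolding t_def xs(1)[symmetric] by (rule pre_outs_Node_zip)
  moreover have "wf_trie \<sigma> t"
    unfolding t_def using xs ts Cons.prems(2)
    by (intro wf_trie_Node_zip) (auto dest: in_set_takeD)
  moreover have
    "concat (map pre_outs (take (card S) ts)) @ concat (map pre_outs (drop (card S) ts)) = L"
    unfolding ts(3)[symmetric]
    by (simp only: concat_append[symmetric] map_append[symmetric] append_take_drop_id)
  ultimately show ?case
    using ts(1,2) \<open>0 < k\<close> by (intro exI[of _ "t # drop (card S) ts"]) (auto dest: in_set_dropD)
qed

lemma pre_outs_subset: "wf_trie \<sigma> t \<Longrightarrow> S \<in> set (pre_outs t) \<Longrightarrow> S \<subseteq> {..<\<sigma>}"
  by (induction \<sigma> t rule: wf_trie.induct) auto

lemma ex_trie_pre_outs_iff: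
  "(\<exists>t. wf_trie \<sigma> t \<and> pre_outs t = L) \<longleftrightarrow> forest_code 1 L \<and> (\<forall>S\<in>set L. S \<subseteq> {..<\<sigma>})"
proof
  assume "\<exists>t. wf_trie \<sigma> t \<and> pre_outs t = L"
  then obtain t where t: "wf_trie \<sigma> t" "pre_outs t = L" by blast
  show "forest_code 1 L \<and> (\<forall>S\<in>set L. S \<subseteq> {..<\<sigma>})"
    using pre_outs_forest_code[OF t(1)] pre_outs_subset[OF t(1)] t(2) by blast
next
  assume "forest_code 1 L \<and> (\<forall>S\<in>set L. S \<subseteq> {..<\<sigma>})"
  then obtain ts where ts: "length ts = 1" "\<forall>t\<in>set ts. wf_trie \<sigma> t"
    "concat (map pre_outs ts) = L"
    using forest_code_imp_ex_forest by blast
  then obtain t where "ts = [t]" by (cases ts) auto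
  with ts(2,3) show "\<exists>t. wf_trie \<sigma> t \<and> pre_outs t = L" by auto
qed

lemma edge_count_eq_length_filter:
  "wf_trie \<sigma> t \<Longrightarrow> edge_count c t = length (filter (\<lambda>S. c \<in> S) (pre_outs t))"
proof (induction \<sigma> t rule: wf_trie.induct)
  case (1 \<sigma> cs)
  then have "distinct (map fst cs)" by (simp add: strict_sorted_iff)
  then have "length (filter (\<lambda>p. fst p = c) cs) = (if c \<in> fst ` set cs then 1 else 0)"
    by (induction cs) auto
  moreover have children: "map (\<lambda>p. edge_count c (snd p)) cs
      = map (\<lambda>p. length (filter (\<lambda>S. c \<in> S) (pre_outs (snd p)))) cs"
    using 1 by (intro map_cong) auto
  ultimately show ?case by (simp add: filter_concat length_concat comp_def children)
qed

lemma cycle_lemma_periodic: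
  fixes w :: "nat \<Rightarrow> int"
  assumes "0 < n" and periodic: "\<And>j. w (j + n) = w j" and total: "(\<Sum>j<n. w j) = -1"
  shows "\<exists>!r. r < n \<and> (\<forall>m<n. 0 \<le> (\<Sum>j<m. w (r + j)))"
proof -
  define s where "s m = (\<Sum>j<m. w j)" for m
  define good where "good r \<longleftrightarrow> (\<forall>m<n. s r \<le> s (r + m))" for r
  have shift: "(\<Sum>j<m. w (r + j)) = s (r + m) - s r" for r m
    by (induction m) (simp_all add: s_def)
  then have good_iff: "(\<forall>m<n. 0 \<le> (\<Sum>j<m. w (r + j))) \<longleftrightarrow> good r" for r
    by (simp add: good_def)
  have s_period: "s (k + n) = s k - 1" for k
  proof -
    have "s (n + k) - s n = s k"
      using shift[of n k] periodic by (simp add: s_def add.commute)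
    then show ?thesis using total by (simp add: s_def add.commute)
  qed
  have not_both_good: False if "good x" "good y" "x < y" "y < n" for x y
  proof -
    have "y - x < n" and "x + n - y < n" using that(3,4) by linarith+
    then have "s x \<le> s (x + (y - x))" and "s y \<le> s (y + (x + n - y))"
      using that(1,2) unfolding good_def by blast+
    then show False using that(3,4) s_period[of x] by simp
  qed
  obtain k0 where "k0 < n" and k0_min: "\<And>k. k < n \<Longrightarrow> s k0 \<le> s k"
  proof -
    have "Min (s ` {..<n}) \<in> s ` {..<n}" using \<open>0 < n\<close> by (intro Min_in) auto
    then obtain k0 where "k0 < n" "s k0 = Min (s ` {..<n})" by auto
    then show thesis using that by simp
  qed
  define r where "r = (LEAST k. s k = s k0)"
  have "s r = s k0" and "r \<le> k0"
    unfolding r_def by (auto intro: LeastI Least_le)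
  have r_strict: "s r < s k" if "k < r" for k
    using not_less_Least[OF that[unfolded r_def]] k0_min[of k] \<open>s r = s k0\<close> \<open>r \<le> k0\<close>
      \<open>k0 < n\<close> that
    by force
  \<comment> \<open>The least minimiser: wrapping around a period lowers s by 1, which the strict
    inequality before r absorbs.\<close>
  have "good r"
    unfolding good_def
  proof (intro allI impI)
    fix m assume "m < n"
    show "s r \<le> s (r + m)"
    proof (cases "r + m < n")
      case True
      then show ?thesis using k0_min \<open>s r = s k0\<close> by simp
    next
      case False
      define k where "k = r + m - n"
      have "k < r" and "r + m = k + n" using False \<open>m < n\<close> unfolding k_def by linarith+
      then show ?thesis using r_strict[of k] s_period[of k] by simp
    qed
  qed
  moreover have "r < n" using \<open>r \<le> k0\<close> \<open>k0 < n\<close> by simp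
  ultimately show ?thesis
    unfolding good_iff by (metis not_both_good linorder_neqE_nat)
qed

lemma sum_list_rotate: "sum_list (rotate r xs) = sum_list (xs :: 'a::comm_monoid_add list)"
proof -
  let ?k = "r mod length xs"
  have "sum_list xs = sum_list (take ?k xs) + sum_list (drop ?k xs)"
    by (metis append_take_drop_id sum_list_append)
  then show ?thesis by (simp add: rotate_drop_take add.commute)
qed

lemma length_filter_rotate: "length (filter P (rotate r xs)) = length (filter P xs)"
proof -
  let ?k = "r mod length xs"
  have "length (filter P xs) = length (filter P (take ?k xs)) + length (filter P (drop ?k xs))"
    by (metis append_take_drop_id filter_append length_append)
  then show ?thesis by (simp add: rotate_drop_take add.commute)
qed

lemma cycle_lemma:
  fixes xs :: "int list"
  assumes "sum_list xs = -1"
  shows "\<exists>!r. r < length xs \<and> (\<forall>m<length xs. 0 \<le> sum_list (take m (rotate r xs)))"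
proof -
  define n where "n = length xs"
  define w where "w j = xs ! (j mod n)" for j
  have "0 < n" using assms by (cases xs) (simp_all add: n_def)
  have prefix: "sum_list (take m (rotate r xs)) = (\<Sum>j<m. w (r + j))" if "m < n" for m r
    using that \<open>0 < n\<close> by (simp add: sum_list_sum_nth nth_rotate w_def n_def atLeast0LessThan)
  have "(\<Sum>j<n. w j) = -1"
    using assms by (simp add: sum_list_sum_nth w_def n_def atLeast0LessThan)
  then have "\<exists>!r. r < n \<and> (\<forall>m<n. 0 \<le> (\<Sum>j<m. w (r + j)))"
    using \<open>0 < n\<close> by (intro cycle_lemma_periodic) (simp_all add: w_def)
  then show ?thesis using prefix by (simp add: n_def)
qed

lemma rotate_ne_self_if_sum_list_neg_one:
  fixes xs :: "int list"
  assumes "sum_list xs = -1" and "0 < d" and "d < length xs"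
  shows "rotate d xs \<noteq> xs"
proof
  assume fixed: "rotate d xs = xs"
  define good where "good r \<longleftrightarrow> (\<forall>m<length xs. 0 \<le> sum_list (take m (rotate r xs)))" for r
  obtain r where "r < length xs" "good r" and unique: "\<And>r'. r' < length xs \<Longrightarrow> good r' \<Longrightarrow> r' = r"
    using cycle_lemma[OF assms(1)] unfolding good_def by blast
  have "rotate ((r + d) mod length xs) xs = rotate r xs"
    using fixed by (simp flip: rotate_conv_mod add: rotate_rotate[symmetric])
  then have "good ((r + d) mod length xs)" using \<open>good r\<close> by (simp add: good_def)
  moreover have "(r + d) mod length xs < length xs" using assms(3) by (intro mod_less_divisor) linarith
  ultimately have "(r + d) mod length xs = r mod length xs"
    using unique[of "(r + d) mod length xs"] \<open>r < length xs\<close> by simp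
  then have "length xs dvd d" by (simp add: mod_eq_dvd_iff_nat)
  then show False using assms(2,3) by (auto dest: dvd_imp_le)
qed

lemma inj_on_rotate_if_sum_list_neg_one:
  fixes xs :: "int list"
  assumes "sum_list xs = -1"
  shows "inj_on (\<lambda>r. rotate r xs) {..<length xs}"
proof (rule linorder_inj_onI')
  fix a b assume "a \<in> {..<length xs}" "b \<in> {..<length xs}" "a < b"
  then have "rotate (b - a) (rotate a xs) \<noteq> rotate a xs"
    using assms by (intro rotate_ne_self_if_sum_list_neg_one) (simp_all add: sum_list_rotate)
  then show "rotate a xs \<noteq> rotate b xs"
    using \<open>a < b\<close> by (simp add: rotate_rotate)
qed

definition columns :: "nat \<Rightarrow> bmat \<Rightarrow> nat set list" where
  "columns n A = map (\<lambda>j. {i. A i j}) [0..<n]"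

lemma length_columns [simp]: "length (columns n A) = n"
  by (simp add: columns_def)

lemma length_filter_columns:
  "length (filter (\<lambda>S. i \<in> S) (columns n A)) = card {j. j < n \<and> A i j}"
  unfolding length_filter_conv_card by (rule arg_cong[where f = card]) (auto simp: columns_def)

lemma columns_rot: "columns n (rot n M r) = rotate r (columns n M)"
  by (rule nth_equalityI) (simp_all add: columns_def rot_def nth_rotate add.commute)

lemma trie_matrix_eq_iff:
  assumes "wf_trie \<sigma> t" and "num_nodes t = n" and "\<forall>i j. A i j \<longrightarrow> i < \<sigma> \<and> j < n"
  shows "trie_matrix \<sigma> t = A \<longleftrightarrow> pre_outs t = columns n A"
proof
  assume "pre_outs t = columns n A"
  then show "trie_matrix \<sigma> t = A"
    using assms(3) by (auto simp: trie_matrix_def columns_def fun_eq_iff)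
next
  assume A: "trie_matrix \<sigma> t = A"
  show "pre_outs t = columns n A"
  proof (rule nth_equalityI)
    show "length (pre_outs t) = length (columns n A)"
      using assms(2) by (simp add: num_nodes_def)
    fix j assume j: "j < length (pre_outs t)"
    then have "pre_outs t ! j \<subseteq> {..<\<sigma>}" using pre_outs_subset[OF assms(1)] nth_mem by blast
    then show "pre_outs t ! j = columns n A ! j"
      using j assms(2) unfolding A[symmetric]
      by (auto simp: trie_matrix_def columns_def num_nodes_def)
  qed
qed

lemma trie_matrix_image_iff_forest_code:
  assumes "A \<in> mats_M \<sigma> n nc"
  shows "A \<in> trie_matrix \<sigma> ` tries_U \<sigma> n nc \<longleftrightarrow> forest_code 1 (columns n A)"
proof
  have supp: "\<forall>i j. A i j \<longrightarrow> i < \<sigma> \<and> j < n" using assms by (simp add: mats_M_def)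
  assume "A \<in> trie_matrix \<sigma> ` tries_U \<sigma> n nc"
  then obtain t where t: "wf_trie \<sigma> t" "num_nodes t = n" "trie_matrix \<sigma> t = A"
    by (auto simp: tries_U_def)
  then show "forest_code 1 (columns n A)"
    using trie_matrix_eq_iff[OF t(1,2) supp] pre_outs_forest_code[OF t(1)] by simp
next
  have supp: "\<forall>i j. A i j \<longrightarrow> i < \<sigma> \<and> j < n"
    and count: "\<forall>c<\<sigma>. card {j. j < n \<and> A c j} = nc c"
    using assms by (simp_all add: mats_M_def)
  assume "forest_code 1 (columns n A)"
  moreover have "\<forall>S\<in>set (columns n A). S \<subseteq> {..<\<sigma>}"
    using supp by (auto simp: columns_def)
  ultimately obtain t where t: "wf_trie \<sigma> t" "pre_outs t = columns n A"
    using ex_trie_pre_outs_iff by blast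
  then have "num_nodes t = n" by (simp add: num_nodes_def)
  moreover have "edge_count c t = nc c" if "c < \<sigma>" for c
    using edge_count_eq_length_filter[OF t(1)] t(2) length_filter_columns count that by simp
  ultimately have "t \<in> tries_U \<sigma> n nc"
    using t(1) by (simp add: tries_U_def)
  moreover have "trie_matrix \<sigma> t = A"
    using trie_matrix_eq_iff[OF t(1) \<open>num_nodes t = n\<close> supp] t(2) by simp
  ultimately show "A \<in> trie_matrix \<sigma> ` tries_U \<sigma> n nc" by blast
qed

lemma rot_in_mats_M:
  assumes "M \<in> mats_M \<sigma> n nc"
  shows "rot n M r \<in> mats_M \<sigma> n nc"
proof -
  have "card {j. j < n \<and> rot n M r i j} = card {j. j < n \<and> M i j}" for i
    by (simp only: length_filter_columns[symmetric] columns_rot length_filter_rotate)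
  then show ?thesis using assms by (auto simp: mats_M_def rot_def)
qed

lemma sum_list_card_columns:
  assumes "M \<in> mats_M \<sigma> n nc"
  shows "sum_list (map card (columns n M)) = (\<Sum>c<\<sigma>. nc c)"
proof -
  have supp: "\<And>i j. M i j \<Longrightarrow> i < \<sigma>"
    and count: "\<And>c. c < \<sigma> \<Longrightarrow> card {j. j < n \<and> M c j} = nc c"
    using assms by (auto simp: mats_M_def)
  have "sum_list (map card (columns n M)) = (\<Sum>j<n. card ({..<\<sigma>} \<inter> {i. M i j}))"
    using supp
    by (simp add: columns_def interv_sum_list_conv_sum_set_nat atLeast0LessThan Int_absorb1 subset_iff)
  also have "\<dots> = (\<Sum>j<n. \<Sum>i<\<sigma>. of_bool (M i j))" by simp
  also have "\<dots> = (\<Sum>i<\<sigma>. \<Sum>j<n. of_bool (M i j))" by (rule sum.swap)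
  also have "\<dots> = (\<Sum>i<\<sigma>. card {j. j < n \<and> M i j})" by (simp add: Int_def lessThan_def)
  also have "\<dots> = (\<Sum>c<\<sigma>. nc c)" using count by simp
  finally show ?thesis .
qed

theorem corollary1:
  fixes \<sigma> n :: nat and nc :: "nat \<Rightarrow> nat" and M :: bmat
  assumes "n \<ge> 1"
    and "(\<Sum>c<\<sigma>. nc c) = n - 1"
    and "M \<in> mats_M \<sigma> n nc"
  shows "inj_on (rot n M) {..<n}
         \<and> (\<exists>!r. r < n \<and> rot n M r \<in> trie_matrix \<sigma> ` tries_U \<sigma> n nc)"
proof -
  define w where "w = (\<lambda>S :: nat set. int (card S) - 1)"
  define ws where "ws = map w (columns n M)"
  have "excess (columns n M) = -1"
    using assms sum_list_card_columns[OF assms(3)] by (simp add: excess_conv_sum_list_card)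
  then have ws_sum: "sum_list ws = -1" and ws_len: "length ws = n"
    by (simp_all add: ws_def w_def excess_def)
  have in_image_iff: "rot n M r \<in> trie_matrix \<sigma> ` tries_U \<sigma> n nc
      \<longleftrightarrow> (\<forall>m<n. 0 \<le> sum_list (take m (rotate r ws)))" for r
  proof -
    have "rot n M r \<in> trie_matrix \<sigma> ` tries_U \<sigma> n nc \<longleftrightarrow> forest_code 1 (rotate r (columns n M))"
      using trie_matrix_image_iff_forest_code[OF rot_in_mats_M[OF assms(3)]]
      by (simp add: columns_rot)
    also have "\<dots> \<longleftrightarrow> (\<forall>m<n. 0 \<le> sum_list (take m (rotate r ws)))"
      unfolding forest_code_one_iff using ws_sum sum_list_rotate[of r ws]
      by (simp add: excess_def ws_def w_def rotate_map take_map)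
    finally show ?thesis .
  qed
  have "\<exists>!r. r < n \<and> rot n M r \<in> trie_matrix \<sigma> ` tries_U \<sigma> n nc"
    using cycle_lemma[OF ws_sum] ws_len by (simp add: in_image_iff)
  moreover have "inj_on ((\<lambda>A. map w (columns n A)) \<circ> rot n M) {..<n}"
    using inj_on_rotate_if_sum_list_neg_one[OF ws_sum] ws_len
    by (simp add: comp_def columns_rot ws_def rotate_map)
  then have "inj_on (rot n M) {..<n}" by (rule inj_on_imageI2)
  ultimately show ?thesis by blast
qed

end
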